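(* Let $B$ be the residue code of an extremal Type~II $\mathbb{Z}_4$-code of length $n$. If $n=32$ then $6\le \dim(B)\le 16$, and if $n=40$ then $7\le\dim(B)\le 20$.
   Context: A $\mathbb{Z}_4$-code of length $n$ is a $\mathbb{Z}_4$-submodule of $\mathbb{Z}_4^n$; it is self-dual if it equals its dual with respect to $x\cdot y=\sum x_iy_i \pmod 4$. The Euclidean weight of $x$ is $n_1(x)+4n_2(x)+n_3(x)$, $n_\alpha(x)$ being the number of coordinates equal to $\alpha$. A Type~II $\mathbb{Z}_4$-code is a self-dual code all of whose codewords have Euclidean weight divisible by $8$; it is extremal if its minimum Euclidean weight equals $8\lfloor n/24\rfloor+8$. The residue code is $C^{(1)}=\{c\bmod 2: c\in C\}$, a binary linear code; $\dim$ denotes its dimension over $\mathbb{F}_2$. *)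

theory Defs
  imports Complex_Main "HOL-Library.Numeral_Type" "HOL-Library.Z2" "HOL-Library.Function_Algebras"
begin

definition z4_vecs :: "nat \<Rightarrow> (nat \<Rightarrow> 4) set" where
  "z4_vecs n = {x. \<forall>i\<ge>n. x i = 0}"

definition z4_code :: "nat \<Rightarrow> (nat \<Rightarrow> 4) set \<Rightarrow> bool" where
  "z4_code n C \<longleftrightarrow> C \<subseteq> z4_vecs n \<and> 0 \<in> C \<and>
     (\<forall>x\<in>C. \<forall>y\<in>C. x + y \<in> C) \<and> (\<forall>a::4. \<forall>x\<in>C. (\<lambda>i. a * x i) \<in> C)"

definition z4_inner :: "nat \<Rightarrow> (nat \<Rightarrow> 4) \<Rightarrow> (nat \<Rightarrow> 4) \<Rightarrow> 4" where
  "z4_inner n x y = (\<Sum>i<n. x i * y i)"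

definition z4_dual :: "nat \<Rightarrow> (nat \<Rightarrow> 4) set \<Rightarrow> (nat \<Rightarrow> 4) set" where
  "z4_dual n C = {y \<in> z4_vecs n. \<forall>x\<in>C. z4_inner n x y = 0}"

definition z4_self_dual :: "nat \<Rightarrow> (nat \<Rightarrow> 4) set \<Rightarrow> bool" where
  "z4_self_dual n C \<longleftrightarrow> z4_code n C \<and> C = z4_dual n C"

definition euclid_wt :: "nat \<Rightarrow> (nat \<Rightarrow> 4) \<Rightarrow> nat" where
  "euclid_wt n x = card {i. i < n \<and> x i = 1} + 4 * card {i. i < n \<and> x i = 2}
                   + card {i. i < n \<and> x i = 3}"

definition type_II :: "nat \<Rightarrow> (nat \<Rightarrow> 4) set \<Rightarrow> bool" where
  "type_II n C \<longleftrightarrow> z4_self_dual n C \<and> (\<forall>c\<in>C. 8 dvd euclid_wt n c)"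

definition min_euclid_wt :: "nat \<Rightarrow> (nat \<Rightarrow> 4) set \<Rightarrow> nat" where
  "min_euclid_wt n C = Min {euclid_wt n c | c. c \<in> C \<and> c \<noteq> 0}"

definition extremal_type_II :: "nat \<Rightarrow> (nat \<Rightarrow> 4) set \<Rightarrow> bool" where
  "extremal_type_II n C \<longleftrightarrow> type_II n C \<and> min_euclid_wt n C = 8 * (n div 24) + 8"

text \<open>Reduction mod 2 of an element of Z4 (Rep_bit0 gives its representative in {0..3}).\<close>
definition red2 :: "4 \<Rightarrow> bit" where
  "red2 a = of_int (Rep_bit0 a)"

definition residue_code :: "(nat \<Rightarrow> 4) set \<Rightarrow> (nat \<Rightarrow> bit) set" where
  "residue_code C = (\<lambda>c i. red2 (c i)) ` C"

definition bin_dim :: "(nat \<Rightarrow> bit) set \<Rightarrow> nat" where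
  "bin_dim B = vector_space.dim (\<lambda>(a::bit) (v::nat \<Rightarrow> bit) i. a * v i) B"

end

theory Submission
  imports Defs
begin

(*
  Let C be a Type II Z4-code of length n > 0 whose nonzero codewords have
  Euclidean weight at least 12, let B be its residue code, k = dim B and T = B^perp.
  (1) Character sums give |B| * |B^perp| = 2^n, and |B| = 2^k.
  (2) Self-duality of C gives B <= T, hence 2^(2k) <= 2^n, i.e. 2k <= n.
  (3) The map v |-> 2v embeds T into C (torsion code) with Euclidean weight 4 wt(v); so
      every vector of T has even Hamming weight and nonzero ones have weight >= 3.
  (4) A sphere-packing count for such an even code: the vectors v + e_i (v in T, i < n)
      are pairwise distinct and of odd weight, so n |T| <= 2^(n-1); with |T| = 2^(n-k)
      this is 2n <= 2^k.
  For an extremal code of length 32 or 40 the minimum Euclidean weight is 16, and the two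
  inequalities 2k <= n, 2n <= 2^k give exactly the stated bounds.
*)

(* Keep + and * on F2 as field operations instead of unfolding them to xor/and. *)
declare add_bit_eq_xor[simp del] mult_bit_eq_and[simp del]

definition bin_vecs :: "nat \<Rightarrow> (nat \<Rightarrow> bit) set" where
  "bin_vecs n = {x. \<forall>i\<ge>n. x i = 0}"

definition bin_inner :: "nat \<Rightarrow> (nat \<Rightarrow> bit) \<Rightarrow> (nat \<Rightarrow> bit) \<Rightarrow> bit" where
  "bin_inner n x y = (\<Sum>i<n. x i * y i)"

definition bin_perp :: "nat \<Rightarrow> (nat \<Rightarrow> bit) set \<Rightarrow> (nat \<Rightarrow> bit) set" where
  "bin_perp n B = {y \<in> bin_vecs n. \<forall>x\<in>B. bin_inner n x y = 0}"

definition unit_vec :: "nat \<Rightarrow> nat \<Rightarrow> bit" where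
  "unit_vec i = (\<lambda>j. if j = i then 1 else 0)"

definition hamming_wt :: "nat \<Rightarrow> (nat \<Rightarrow> bit) \<Rightarrow> nat" where
  "hamming_wt n v = card {i. i < n \<and> v i = 1}"

text \<open>A binary linear code of length n: an additive subgroup of the length-n vectors
  (over F2 this is the same as a subspace).\<close>
definition bin_code :: "nat \<Rightarrow> (nat \<Rightarrow> bit) set \<Rightarrow> bool" where
  "bin_code n B \<longleftrightarrow> B \<subseteq> bin_vecs n \<and> 0 \<in> B \<and> (\<forall>x\<in>B. \<forall>y\<in>B. x + y \<in> B)"

lemma bit_cases2: "(k::bit) = 0 \<or> k = 1"
  by (cases k) auto

lemma bit_add_self [simp]: "(a::bit) + a = 0"
  by (cases a) auto

lemma fun_add_self [simp]: "(x::nat \<Rightarrow> bit) + x = 0"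
  by (simp add: fun_eq_iff)

lemma bin_inner_add_left: "bin_inner n (x + y) z = bin_inner n x z + bin_inner n y z"
  by (simp add: bin_inner_def sum.distrib distrib_right)

lemma bin_inner_add_right: "bin_inner n z (x + y) = bin_inner n z x + bin_inner n z y"
  by (simp add: bin_inner_def sum.distrib distrib_left)

lemma bin_inner_zero_left [simp]: "bin_inner n 0 x = 0"
  by (simp add: bin_inner_def)

lemma bin_inner_zero_right [simp]: "bin_inner n x 0 = 0"
  by (simp add: bin_inner_def)

lemma bin_inner_unit_vec:
  assumes "i < n" shows "bin_inner n b (unit_vec i) = b i"
proof -
  have "bin_inner n b (unit_vec i) = (\<Sum>j<n. if j = i then b j else 0)"
    unfolding bin_inner_def unit_vec_def by (rule sum.cong) auto
  then show ?thesis using assms by simp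
qed

lemma of_nat_bit_eq_0: "(of_nat m :: bit) = 0 \<longleftrightarrow> even m"
  by (induction m) auto

definition all_ones :: "nat \<Rightarrow> nat \<Rightarrow> bit" where
  "all_ones n = (\<lambda>i. if i < n then 1 else 0)"

lemma bin_inner_all_ones: "bin_inner n (all_ones n) v = of_nat (hamming_wt n v)"
proof -
  have "bin_inner n (all_ones n) v = (\<Sum>i<n. (of_bool (v i = 1) :: bit))"
    unfolding bin_inner_def all_ones_def by (rule sum.cong) (use bit_cases2 in auto)
  also have "\<dots> = of_nat (card ({..<n} \<inter> {i. v i = 1}))" by simp
  also have "{..<n} \<inter> {i. v i = 1} = {i. i < n \<and> v i = 1}" by auto
  finally show ?thesis by (simp add: hamming_wt_def)
qed

lemma hamming_wt_unit_sum_le: "hamming_wt n (unit_vec i + unit_vec j) \<le> 2"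
proof -
  have "card {l. l < n \<and> (unit_vec i + unit_vec j) l = 1} \<le> card {i, j}"
    by (rule card_mono) (auto simp: unit_vec_def)
  also have "\<dots> \<le> 2" by (simp add: card_insert_if)
  finally show ?thesis by (simp add: hamming_wt_def)
qed

text \<open>There are 2^n binary vectors of length n: flipping the last coordinate doubles the count.\<close>
lemma card_bin_vecs: "finite (bin_vecs n) \<and> card (bin_vecs n) = 2 ^ n"
proof (induction n)
  case 0
  have "bin_vecs 0 = {0}" by (auto simp: bin_vecs_def fun_eq_iff)
  then show ?case by simp
next
  case (Suc n)
  let ?flip = "\<lambda>x. x + unit_vec n"
  have eq: "bin_vecs (Suc n) = bin_vecs n \<union> ?flip ` bin_vecs n"
  proof (rule set_eqI, rule iffI)
    fix x assume x: "x \<in> bin_vecs (Suc n)"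
    show "x \<in> bin_vecs n \<union> ?flip ` bin_vecs n"
    proof (cases "x n = 0")
      case True
      have "x i = 0" if "n \<le> i" for i
        using that x True by (cases "i = n") (auto simp: bin_vecs_def)
      then show ?thesis by (auto simp: bin_vecs_def)
    next
      case False
      then have "?flip x \<in> bin_vecs n" using x bit_cases2
        by (auto simp: bin_vecs_def unit_vec_def le_Suc_eq)
      moreover have "x = ?flip (?flip x)" by (simp add: add.assoc)
      ultimately show ?thesis by blast
    qed
  qed (auto simp: bin_vecs_def unit_vec_def)
  have disj: "bin_vecs n \<inter> ?flip ` bin_vecs n = {}"
    by (auto simp: bin_vecs_def unit_vec_def)
  have inj: "inj_on ?flip (bin_vecs n)" by (rule inj_onI) simp
  show ?case using Suc eq disj inj by (simp add: card_Un_disjoint card_image)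
qed

lemma bin_code_finite: "bin_code n B \<Longrightarrow> finite B"
  using card_bin_vecs finite_subset by (auto simp: bin_code_def)

lemma bin_code_perp: "bin_code n (bin_perp n B)"
  by (auto simp: bin_code_def bin_perp_def bin_vecs_def bin_inner_add_right)

section \<open>Size of the orthogonal complement\<close>

definition sign_char :: "bit \<Rightarrow> int" where
  "sign_char b = (if b = 0 then 1 else -1)"

lemma sign_char_add1: "sign_char (b + 1) = - sign_char b"
  by (cases b) (auto simp: sign_char_def)

lemma sum_zero_by_negating_involution:
  fixes \<phi> :: "'a \<Rightarrow> int"
  assumes "\<And>a. a \<in> A \<Longrightarrow> f a \<in> A" "\<And>a. a \<in> A \<Longrightarrow> f (f a) = a"
    and "\<And>a. a \<in> A \<Longrightarrow> \<phi> (f a) = - \<phi> a"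
  shows "sum \<phi> A = 0"
proof -
  have "bij_betw f A A" by (rule bij_betw_byWitness[where f' = f]) (use assms in auto)
  then have "sum \<phi> A = sum (\<phi> \<circ> f) A" using sum.reindex_bij_betw[of f A A \<phi>] by simp
  also have "\<dots> = - sum \<phi> A" by (simp add: assms(3) sum_negf)
  finally show ?thesis by simp
qed

lemma char_sum_over_code:
  assumes B: "bin_code n B" and x: "x \<in> bin_vecs n"
  shows "(\<Sum>b\<in>B. sign_char (bin_inner n b x)) = (if x \<in> bin_perp n B then int (card B) else 0)"
proof (cases "x \<in> bin_perp n B")
  case True
  then show ?thesis by (simp add: bin_perp_def sign_char_def)
next
  case False
  then obtain b0 where b0: "b0 \<in> B" "bin_inner n b0 x = 1"
    using x bit_cases2 by (auto simp: bin_perp_def)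
  have "(\<Sum>b\<in>B. sign_char (bin_inner n b x)) = 0"
  proof (rule sum_zero_by_negating_involution[where f = "\<lambda>b. b + b0"])
    fix b assume "b \<in> B"
    show "b + b0 \<in> B" using B \<open>b \<in> B\<close> b0(1) by (simp add: bin_code_def)
    show "b + b0 + b0 = b" by (simp add: add.assoc)
    show "sign_char (bin_inner n (b + b0) x) = - sign_char (bin_inner n b x)"
      by (simp add: bin_inner_add_left b0(2) sign_char_add1 del: bit_not_zero_iff)
  qed
  then show ?thesis using False by simp
qed

lemma char_sum_over_vecs:
  assumes b: "b \<in> bin_vecs n"
  shows "(\<Sum>x\<in>bin_vecs n. sign_char (bin_inner n b x)) = (if b = 0 then 2 ^ n else 0)"
proof (cases "b = 0")
  case True
  then show ?thesis using card_bin_vecs[of n] by (simp add: sign_char_def)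
next
  case False
  then obtain i where i: "b i = 1" using bit_cases2 by (auto simp: fun_eq_iff)
  then have "i < n" using b by (auto simp: bin_vecs_def not_le[symmetric])
  have "(\<Sum>x\<in>bin_vecs n. sign_char (bin_inner n b x)) = 0"
  proof (rule sum_zero_by_negating_involution[where f = "\<lambda>x. x + unit_vec i"])
    fix x assume "x \<in> bin_vecs n"
    then show "x + unit_vec i \<in> bin_vecs n" using \<open>i < n\<close> by (auto simp: bin_vecs_def unit_vec_def)
    show "x + unit_vec i + unit_vec i = x" by (simp add: add.assoc)
    show "sign_char (bin_inner n b (x + unit_vec i)) = - sign_char (bin_inner n b x)"
      using i by (simp add: bin_inner_add_right bin_inner_unit_vec \<open>i < n\<close> sign_char_add1)
  qed
  then show ?thesis using False by simp
qed

text \<open>|B| * |B^perp| = 2^n, by evaluating the double character sum in both orders.\<close>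
lemma card_code_times_card_perp:
  assumes B: "bin_code n B"
  shows "card B * card (bin_perp n B) = 2 ^ n"
proof -
  have fW: "finite (bin_vecs n)" using card_bin_vecs by blast
  have BW: "B \<subseteq> bin_vecs n" and B0: "0 \<in> B" using B by (auto simp: bin_code_def)
  have pW: "bin_perp n B \<subseteq> bin_vecs n" by (auto simp: bin_perp_def)
  let ?S = "\<Sum>x\<in>bin_vecs n. \<Sum>b\<in>B. sign_char (bin_inner n b x)"
  have "?S = (\<Sum>x\<in>bin_vecs n. if x \<in> bin_perp n B then int (card B) else 0)"
    using char_sum_over_code[OF B] by (rule sum.cong[OF refl])
  also have "\<dots> = int (card B) * int (card (bin_perp n B))"
    using fW pW by (simp add: sum.If_cases Int_absorb1)
  finally have S1: "?S = int (card B) * int (card (bin_perp n B))" .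
  have "?S = (\<Sum>b\<in>B. \<Sum>x\<in>bin_vecs n. sign_char (bin_inner n b x))" by (rule sum.swap)
  also have "\<dots> = (\<Sum>b\<in>B. if b = 0 then 2 ^ n else 0)"
  proof (rule sum.cong[OF refl])
    fix b assume "b \<in> B"
    then show "(\<Sum>x\<in>bin_vecs n. sign_char (bin_inner n b x)) = (if b = 0 then 2 ^ n else 0)"
      using char_sum_over_vecs BW by blast
  qed
  also have "\<dots> = 2 ^ n" using bin_code_finite[OF B] B0 by simp
  finally have "int (card B * card (bin_perp n B)) = int (2 ^ n)" using S1 by simp
  then show ?thesis by (simp only: of_nat_eq_iff)
qed

section \<open>A binary linear code of dimension k has 2^k elements\<close>

text \<open>Binary vectors form an F2-vector space; bin_dim is the dimension in this space.\<close>
interpretation bv: vector_space "\<lambda>(a::bit) (v::nat\<Rightarrow>bit) i. a * v i"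
  by unfold_locales (auto simp: fun_eq_iff algebra_simps)

lemma span_insert_bit:
  "bv.span (insert a S) = bv.span S \<union> (\<lambda>y. a + y) ` bv.span S"
proof -
  have shift0: "x - (\<lambda>i. 0 * a i) = x" for x
    by (simp add: fun_eq_iff)
  have shift1: "x - (\<lambda>i. 1 * a i) = x + a" for x
  proof -
    have "x - y = x + y" for y :: "nat \<Rightarrow> bit" by (simp add: fun_eq_iff)
    then show ?thesis by simp
  qed
  have "bv.span (insert a S) = {x. \<exists>k. x - (\<lambda>i. k * a i) \<in> bv.span S}"
    by (rule bv.span_insert)
  also have "\<dots> = {x. x \<in> bv.span S \<or> x + a \<in> bv.span S}"
  proof (intro Collect_cong iffI)
    fix x assume "\<exists>k. x - (\<lambda>i. k * a i) \<in> bv.span S"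
    then obtain k where k: "x - (\<lambda>i. k * a i) \<in> bv.span S" by blast
    then have "x - (\<lambda>i. 0 * a i) \<in> bv.span S \<or> x - (\<lambda>i. 1 * a i) \<in> bv.span S"
      using bit_cases2[of k] by blast
    then show "x \<in> bv.span S \<or> x + a \<in> bv.span S"
      by (simp only: shift0 shift1)
  next
    fix x assume "x \<in> bv.span S \<or> x + a \<in> bv.span S"
    then have "x - (\<lambda>i. 0 * a i) \<in> bv.span S \<or> x - (\<lambda>i. 1 * a i) \<in> bv.span S"
      by (simp only: shift0 shift1)
    then show "\<exists>k. x - (\<lambda>i. k * a i) \<in> bv.span S" by blast
  qed
  also have "\<dots> = bv.span S \<union> (\<lambda>y. a + y) ` bv.span S"
  proof -
    have cancel: "a + (y + a) = y" "(a + y) + a = y" for y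
      by (simp_all only: ac_simps fun_add_self add_0_left add.left_commute[of a a] flip: add.assoc)
    have "x + a \<in> bv.span S \<longleftrightarrow> x \<in> (\<lambda>y. a + y) ` bv.span S" for x
    proof
      assume "x + a \<in> bv.span S"
      then show "x \<in> (\<lambda>y. a + y) ` bv.span S" using cancel(1)[of x] by (metis image_eqI)
    qed (auto simp: cancel(2))
    then show ?thesis by blast
  qed
  finally show ?thesis .
qed

lemma card_span_independent:
  assumes "finite S" "bv.independent S" "finite (bv.span S)"
  shows "card (bv.span S) = 2 ^ card S"
  using assms
proof (induction S rule: finite_induct)
  case empty
  then show ?case by (simp add: bv.span_empty)
next
  case (insert a S)
  have indS: "bv.independent S" and aS: "a \<notin> bv.span S"
    using insert.prems(1) insert.hyps(2) by (auto simp: bv.independent_insert)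
  have "bv.span S \<subseteq> bv.span (insert a S)" by (rule bv.span_mono) blast
  then have fin: "finite (bv.span S)" using insert.prems(2) finite_subset by blast
  have disj: "bv.span S \<inter> (\<lambda>y. a + y) ` bv.span S = {}"
  proof (rule ccontr)
    assume "bv.span S \<inter> (\<lambda>y. a + y) ` bv.span S \<noteq> {}"
    then obtain y where y: "y \<in> bv.span S" "a + y \<in> bv.span S" by blast
    then have "(a + y) + y \<in> bv.span S" by (rule bv.span_add[rotated])
    then show False using aS by (simp add: add.assoc)
  qed
  have inj: "inj_on (\<lambda>y. a + y) (bv.span S)" by (rule inj_onI) simp
  have "card (bv.span (insert a S)) = 2 * card (bv.span S)"
    using span_insert_bit disj fin inj by (simp add: card_Un_disjoint card_image)
  then show ?case using insert indS fin by simp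
qed

text \<open>A binary linear code is a subspace, so a basis of it has bin_dim elements and spans it.\<close>
lemma card_eq_2_pow_bin_dim:
  assumes B: "bin_code n B"
  shows "card B = 2 ^ bin_dim B"
proof -
  have fB: "finite B" by (rule bin_code_finite[OF B])
  have "(\<lambda>i. c * x i) \<in> B" if "x \<in> B" for c :: bit and x
  proof -
    have "(\<lambda>i. c * x i) = (if c = 0 then 0 else x)"
      using bit_cases2[of c] by (auto simp: fun_eq_iff)
    then show ?thesis using that B by (simp add: bin_code_def)
  qed
  then have sB: "bv.subspace B" using B by (auto simp: bv.subspace_def bin_code_def)
  obtain S where S: "S \<subseteq> B" "bv.independent S" "B \<subseteq> bv.span S" "card S = bv.dim B"
    by (rule bv.basis_exists)
  have "bv.span S \<subseteq> B" using S(1) sB by (rule bv.span_minimal)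
  then have sp: "bv.span S = B" using S(3) by blast
  have "finite S" using S(1) fB finite_subset by blast
  then have "card (bv.span S) = 2 ^ card S" using card_span_independent[OF _ S(2)] sp fB by simp
  then show ?thesis using sp S(4) by (simp add: bin_dim_def)
qed

section \<open>A sphere-packing bound for even codes\<close>

text \<open>The even-weight vectors form half of all vectors: they are the complement of the
  all-ones vector.\<close>
lemma even_vecs_half:
  assumes "0 < n"
  shows "2 * card {x \<in> bin_vecs n. even (hamming_wt n x)} = 2 ^ n"
proof -
  have "all_ones n \<noteq> 0" using assms by (auto simp: all_ones_def fun_eq_iff)
  then have card2: "card {0, all_ones n} = 2" by simp
  have code: "bin_code n {0, all_ones n}" by (auto simp: bin_code_def bin_vecs_def all_ones_def)
  have "bin_perp n {0, all_ones n} = {x \<in> bin_vecs n. even (hamming_wt n x)}"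
    by (auto simp: bin_perp_def bin_inner_all_ones of_nat_bit_eq_0)
  then show ?thesis using card_code_times_card_perp[OF code] card2 by simp
qed

text \<open>If all vectors of T have even weight and distinct vectors of T are at distance at least 3,
  then the translates v + e_i (v in T, i < n) are distinct odd-weight vectors, so
  2 n |T| <= 2^n.\<close>
lemma even_code_packing_bound:
  assumes T: "bin_code n T" and n: "0 < n"
    and even: "\<And>v. v \<in> T \<Longrightarrow> even (hamming_wt n v)"
    and dist: "\<And>v. v \<in> T \<Longrightarrow> v \<noteq> 0 \<Longrightarrow> 3 \<le> hamming_wt n v"
  shows "2 * (card T * n) \<le> 2 ^ n"
proof -
  define E where "E = {x \<in> bin_vecs n. even (hamming_wt n x)}"
  define g where "g = (\<lambda>(v, i). v + unit_vec i)"
  have fW: "finite (bin_vecs n)" and cW: "card (bin_vecs n) = 2 ^ n" using card_bin_vecs by auto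
  have TW: "T \<subseteq> bin_vecs n" and Tadd: "\<And>v w. v \<in> T \<Longrightarrow> w \<in> T \<Longrightarrow> v + w \<in> T"
    using T by (auto simp: bin_code_def)
  have img: "g ` (T \<times> {..<n}) \<subseteq> bin_vecs n - E"
  proof
    fix z assume "z \<in> g ` (T \<times> {..<n})"
    then obtain v i where v: "v \<in> T" and i: "i < n" and z: "z = v + unit_vec i"
      by (auto simp: g_def)
    have "(of_nat (hamming_wt n (v + unit_vec i)) :: bit)
          = bin_inner n (all_ones n) v + bin_inner n (all_ones n) (unit_vec i)"
      by (simp only: bin_inner_all_ones[symmetric] bin_inner_add_right)
    also have "\<dots> = 1"
    proof -
      have "all_ones n i = 1" using i by (simp add: all_ones_def)
      then show ?thesis
        using even[OF v] by (simp add: bin_inner_all_ones[of n v] bin_inner_unit_vec[OF i] of_nat_bit_eq_0)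
    qed
    finally have "odd (hamming_wt n (v + unit_vec i))" using of_nat_bit_eq_0 by force
    moreover have "v + unit_vec i \<in> bin_vecs n" using v i TW by (auto simp: bin_vecs_def unit_vec_def)
    ultimately show "z \<in> bin_vecs n - E" by (simp add: z E_def)
  qed
  have inj: "inj_on g (T \<times> {..<n})"
  proof (rule inj_onI, clarify)
    fix v i w j assume v: "v \<in> T" and w: "w \<in> T" and "g (v, i) = g (w, j)"
    then have eq: "v + unit_vec i = w + unit_vec j" by (simp add: g_def)
    have "v + w = (v + unit_vec i) + (w + unit_vec i)" by (simp add: ac_simps)
    also have "\<dots> = (w + unit_vec j) + (w + unit_vec i)" using eq by simp
    also have "\<dots> = (w + w) + (unit_vec i + unit_vec j)" by (simp only: ac_simps)
    finally have sum_eq: "v + w = unit_vec i + unit_vec j" by simp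
    have "v = w"
    proof (rule ccontr)
      assume "v \<noteq> w"
      then have "v + w \<noteq> 0" by (metis add.right_neutral add.assoc fun_add_self)
      then have "3 \<le> hamming_wt n (v + w)" using dist Tadd v w by blast
      then show False using sum_eq hamming_wt_unit_sum_le[of n i j] by simp
    qed
    moreover then have "unit_vec i i = unit_vec j i" using eq by simp
    ultimately show "v = w \<and> i = j" by (auto simp: unit_vec_def split: if_splits)
  qed
  have "card T * n = card (g ` (T \<times> {..<n}))"
    using inj by (simp add: card_image card_cartesian_product)
  also have "\<dots> \<le> card (bin_vecs n - E)" using img fW by (intro card_mono) auto
  also have "\<dots> = 2 ^ n - card E" using fW cW by (simp add: E_def card_Diff_subset)
  finally show ?thesis using even_vecs_half[OF n] by (simp add: E_def)
qed

lemma z4_cases: "(x::4) = 0 \<or> x = 1 \<or> x = 2 \<or> x = 3"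
proof (cases x)
  case (of_int z)
  then have "z = 0 \<or> z = 1 \<or> z = 2 \<or> z = 3" by auto
  then show ?thesis using of_int by auto
qed

lemma red2_0 [simp]: "red2 0 = 0" by (simp add: red2_def bit0.Rep_0)
lemma red2_1 [simp]: "red2 1 = 1" by (simp add: red2_def bit0.Rep_1)
lemma red2_2 [simp]: "red2 2 = 0" by (simp add: red2_def bit0.Rep_numeral)
lemma red2_3 [simp]: "red2 3 = 1" by (simp add: red2_def bit0.Rep_numeral)

lemma red2_add: "red2 (a + b) = red2 a + red2 b"
  using z4_cases[of a] z4_cases[of b]
  by (auto simp: red2_def bit0.Rep_numeral bit0.Rep_0 bit0.Rep_1)

lemma red2_mult: "red2 (a * b) = red2 a * red2 b"
  using z4_cases[of a] z4_cases[of b]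
  by (auto simp: red2_def bit0.Rep_numeral bit0.Rep_0 bit0.Rep_1)

lemma red2_sum: "red2 (\<Sum>i\<in>A. f i) = (\<Sum>i\<in>A. red2 (f i))"
  by (induction A rule: infinite_finite_induct) (auto simp: red2_add)

text \<open>Multiplication by 2 gives an additive embedding F2 -> Z4, with 2 * (c * b) depending only on
  c mod 2.\<close>
definition dbl :: "bit \<Rightarrow> 4" where
  "dbl b = (if b = 1 then 2 else 0)"

lemma dbl_0 [simp]: "dbl 0 = 0"
  by (simp add: dbl_def)

lemma dbl_add: "dbl (a + b) = dbl a + dbl b"
  by (cases a; cases b) (auto simp: dbl_def)

lemma dbl_sum: "dbl (\<Sum>i\<in>A. f i) = (\<Sum>i\<in>A. dbl (f i))"
  by (induction A rule: infinite_finite_induct) (simp_all add: dbl_add)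

lemma mult_dbl: "c * dbl v = dbl (red2 c * v)"
  using z4_cases[of c] by (cases v) (auto simp: dbl_def)

definition red_vec :: "(nat \<Rightarrow> 4) \<Rightarrow> nat \<Rightarrow> bit" where
  "red_vec c = (\<lambda>i. red2 (c i))"

definition dbl_vec :: "(nat \<Rightarrow> bit) \<Rightarrow> nat \<Rightarrow> 4" where
  "dbl_vec v = (\<lambda>i. dbl (v i))"

lemma residue_code_eq: "residue_code C = red_vec ` C"
  by (simp add: residue_code_def red_vec_def)

lemma red2_z4_inner: "red2 (z4_inner n c d) = bin_inner n (red_vec c) (red_vec d)"
  by (simp add: z4_inner_def bin_inner_def red_vec_def red2_sum red2_mult)

lemma z4_inner_dbl_vec: "z4_inner n c (dbl_vec v) = dbl (bin_inner n (red_vec c) v)"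
  by (simp add: z4_inner_def bin_inner_def dbl_vec_def red_vec_def mult_dbl dbl_sum)

text \<open>A doubled vector has entries 0 and 2 only, each 2 contributing 4 to the Euclidean weight.\<close>
lemma euclid_wt_dbl_vec: "euclid_wt n (dbl_vec v) = 4 * hamming_wt n v"
proof -
  have "{i. i < n \<and> dbl_vec v i = 1} = {}" "{i. i < n \<and> dbl_vec v i = 3} = {}"
    "{i. i < n \<and> dbl_vec v i = 2} = {i. i < n \<and> v i = 1}"
    by (auto simp: dbl_vec_def dbl_def)
  then show ?thesis by (simp add: euclid_wt_def hamming_wt_def)
qed

text \<open>Each coordinate contributes at most 4 (crudely bounded here by 6) to the Euclidean weight.\<close>
lemma euclid_wt_le: "euclid_wt n c \<le> 6 * n"
proof -
  have "card {i. i < n \<and> P i} \<le> n" for P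
    using card_mono[of "{..<n}" "{i. i < n \<and> P i}"] by auto
  from this[of "\<lambda>i. c i = 1"] this[of "\<lambda>i. c i = 2"] this[of "\<lambda>i. c i = 3"]
  show ?thesis unfolding euclid_wt_def by linarith
qed

text \<open>The minimum Euclidean weight bounds the weight of every nonzero codeword (the set of
  weights is finite since weights are at most 6n).\<close>
lemma min_euclid_wt_le:
  assumes "c \<in> C" "c \<noteq> 0" shows "min_euclid_wt n C \<le> euclid_wt n c"
  unfolding min_euclid_wt_def
proof (rule Min_le)
  show "finite {euclid_wt n c | c. c \<in> C \<and> c \<noteq> 0}"
    by (rule finite_subset[of _ "{..6*n}"]) (auto simp: euclid_wt_le)
qed (use assms in blast)

section \<open>The residue code and the torsion code of a self-dual Z4-code\<close>

lemma residue_code_bin_code: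
  assumes "z4_code n C" shows "bin_code n (residue_code C)"
proof -
  have C: "C \<subseteq> z4_vecs n" "0 \<in> C" "\<And>c d. c \<in> C \<Longrightarrow> d \<in> C \<Longrightarrow> c + d \<in> C"
    using assms by (auto simp: z4_code_def)
  have "red_vec ` C \<subseteq> bin_vecs n"
    using C(1) by (auto simp: z4_vecs_def bin_vecs_def red_vec_def)
  moreover have "0 \<in> red_vec ` C"
  proof
    show "0 = red_vec 0" by (simp add: red_vec_def fun_eq_iff)
  qed (rule C(2))
  moreover have "red_vec c + red_vec d \<in> red_vec ` C" if "c \<in> C" "d \<in> C" for c d
  proof
    show "red_vec c + red_vec d = red_vec (c + d)" by (simp add: red_vec_def fun_eq_iff red2_add)
  qed (rule C(3)[OF that])
  ultimately show ?thesis by (auto simp: bin_code_def residue_code_eq)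
qed

lemma residue_code_self_orthogonal:
  assumes sd: "z4_self_dual n C"
  shows "residue_code C \<subseteq> bin_perp n (residue_code C)"
proof -
  have code: "bin_code n (residue_code C)"
    using sd by (simp add: z4_self_dual_def residue_code_bin_code)
  have "bin_inner n (red_vec c) (red_vec d) = 0" if "c \<in> C" "d \<in> C" for c d
  proof -
    have "z4_inner n c d = 0" using sd that by (auto simp: z4_self_dual_def z4_dual_def)
    then show ?thesis by (metis red2_z4_inner red2_0)
  qed
  then show ?thesis using code by (auto simp: bin_perp_def bin_code_def residue_code_eq)
qed

lemma dbl_vec_perp_in_code:
  assumes sd: "z4_self_dual n C" and v: "v \<in> bin_perp n (residue_code C)"
  shows "dbl_vec v \<in> C"
proof -
  have "dbl_vec v \<in> z4_vecs n"
    using v by (auto simp: bin_perp_def bin_vecs_def z4_vecs_def dbl_vec_def dbl_def)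
  moreover have "z4_inner n c (dbl_vec v) = 0" if "c \<in> C" for c
    using v that by (auto simp: z4_inner_dbl_vec bin_perp_def residue_code_eq dbl_def)
  ultimately show ?thesis using sd by (auto simp: z4_self_dual_def z4_dual_def)
qed

text \<open>For a Type II code of length n whose nonzero codewords have Euclidean weight at least 12,
  the residue code of dimension k satisfies 2k <= n (self-orthogonality) and 2n <= 2^k
  (packing bound for the torsion code B^perp, which is even with minimum distance at least 3).\<close>
theorem type_II_residue_dim_bounds:
  assumes tII: "type_II n C" and n: "0 < n"
    and min12: "\<And>c. c \<in> C \<Longrightarrow> c \<noteq> 0 \<Longrightarrow> 12 \<le> euclid_wt n c"
  shows "2 * bin_dim (residue_code C) \<le> n \<and> 2 * n \<le> 2 ^ bin_dim (residue_code C)"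
proof -
  define B where "B = residue_code C"
  define T where "T = bin_perp n B"
  define k where "k = bin_dim B"
  have sd: "z4_self_dual n C" and wt8: "\<And>c. c \<in> C \<Longrightarrow> 8 dvd euclid_wt n c"
    using tII by (auto simp: type_II_def)
  have B: "bin_code n B" using sd by (simp add: B_def z4_self_dual_def residue_code_bin_code)
  have T: "bin_code n T" by (simp add: T_def bin_code_perp)
  have cB: "card B = 2 ^ k" unfolding k_def by (rule card_eq_2_pow_bin_dim[OF B])
  have cBT: "2 ^ k * card T = 2 ^ n" using card_code_times_card_perp[OF B] cB by (simp add: T_def)
  have BT: "B \<subseteq> T" using residue_code_self_orthogonal[OF sd] by (simp add: B_def T_def)
  have dblT: "dbl_vec v \<in> C" if "v \<in> T" for v
    using dbl_vec_perp_in_code[OF sd] that by (simp add: T_def B_def)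
  have even: "even (hamming_wt n v)" if "v \<in> T" for v
  proof -
    have "8 dvd 4 * hamming_wt n v" using wt8[OF dblT[OF that]] by (simp add: euclid_wt_dbl_vec)
    then show ?thesis using nat_mult_dvd_cancel1[of 4 2 "hamming_wt n v"] by simp
  qed
  have dist: "3 \<le> hamming_wt n v" if v: "v \<in> T" "v \<noteq> 0" for v
  proof -
    obtain i where "v i = 1" using v(2) bit_cases2 by (auto simp: fun_eq_iff)
    then have "dbl_vec v \<noteq> 0" by (auto simp: dbl_vec_def dbl_def fun_eq_iff)
    then show ?thesis using min12[OF dblT[OF v(1)]] by (simp add: euclid_wt_dbl_vec)
  qed
  have "2 ^ k * 2 ^ k \<le> (2::nat) ^ k * card T"
    using cB card_mono[OF bin_code_finite[OF T] BT] by simp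
  moreover have "(2::nat) ^ (2 * k) = 2 ^ k * 2 ^ k" by (simp add: power_add mult_2)
  ultimately have "2 ^ (2 * k) \<le> (2::nat) ^ n" using cBT by simp
  then have upper: "2 * k \<le> n" by (rule power_le_imp_le_exp[rotated]) simp
  have "2 ^ n * (2 * n) = 2 ^ k * (2 * (card T * n))" using cBT by (simp add: ac_simps)
  also have "\<dots> \<le> 2 ^ k * 2 ^ n" using even_code_packing_bound[OF T n even dist] by simp
  finally have "2 ^ n * (2 * n) \<le> 2 ^ n * 2 ^ k" by (simp add: ac_simps)
  then have lower: "2 * n \<le> 2 ^ k" by simp
  show ?thesis using upper lower by (simp add: k_def B_def)
qed

theorem mainTheorem2:
  fixes n :: nat and C :: "(nat \<Rightarrow> 4) set"
  assumes "extremal_type_II n C"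
  shows "(n = 32 \<longrightarrow> 6 \<le> bin_dim (residue_code C) \<and> bin_dim (residue_code C) \<le> 16) \<and>
         (n = 40 \<longrightarrow> 7 \<le> bin_dim (residue_code C) \<and> bin_dim (residue_code C) \<le> 20)"
proof -
  let ?k = "bin_dim (residue_code C)"
  have bounds: "2 * ?k \<le> n \<and> 2 * n \<le> 2 ^ ?k" if n: "n = 32 \<or> n = 40"
  proof (rule type_II_residue_dim_bounds)
    show "type_II n C" using assms by (simp add: extremal_type_II_def)
    show "0 < n" using n by auto
    fix c assume "c \<in> C" "c \<noteq> 0"
    then have "min_euclid_wt n C \<le> euclid_wt n c" by (rule min_euclid_wt_le)
    moreover have "min_euclid_wt n C = 16" using assms n by (auto simp: extremal_type_II_def)
    ultimately show "12 \<le> euclid_wt n c" by simp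
  qed
  show ?thesis
    using bounds power_le_imp_le_exp[of "2::nat" 6 ?k] power_less_imp_less_exp[of "2::nat" 6 ?k] by auto
qed

end
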